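(* Let $p\in(0,1)$ and let $(\lambda_n)_{n\ge1}$ be a sequence with $\lambda_1=1$ and $0\le\lambda_n\le\lambda_{n-1}$ for all $n>1$. Let $r_1,r_2,\dots$ be $\{0,1\}$-valued random variables with $\Pr(r_1=1)=p$ and, for every $n\ge2$, $\Pr(r_n=1\mid r_1,\dots,r_{n-1})=\lambda_n p+(1-\lambda_n)\bar p_{n-1}$, where $\bar p_m=\frac1m\sum_{i=1}^m r_i$. For arbitrary (deterministic) values $\hat\lambda_i\in(0,1]$, $i\ge2$, define $\hat r_1=r_1$ and $\hat r_i=\frac{r_i-(1-\hat\lambda_i)\bar p_{i-1}}{\hat\lambda_i}$ for $i\ge2$, and for weights $\omega_1,\dots,\omega_n>0$ define $\hat p_n=\frac{\sum_{i=1}^n\omega_i\hat r_i}{\sum_{i=1}^n\omega_i}$. Then $\mathbb{E}[\hat r_i]=p$ for every $i\ge1$, and consequently $\mathbb{E}[\hat p_n]=p$.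
   Context: $\hat\lambda_i$ is an estimate of $\lambda_i$ (which need not be correct); $\hat r_i$ is the affine correction of the $i$-th rating and $\hat p_n$ the affine (weighted-mean) estimator of $p$. *)

theory Defs
  imports "HOL-Probability.Probability"
begin

definition gen_alg :: "'a measure \<Rightarrow> (nat \<Rightarrow> 'a \<Rightarrow> real) \<Rightarrow> nat \<Rightarrow> 'a measure" where
  "gen_alg M r n = sigma (space M)
     {r i -` A \<inter> space M | i A. i \<in> {1..n} \<and> A \<in> sets borel}"

definition pbar :: "(nat \<Rightarrow> 'a \<Rightarrow> real) \<Rightarrow> nat \<Rightarrow> 'a \<Rightarrow> real" where
  "pbar r m x = (\<Sum>i=1..m. r i x) / real m"

definition rhat :: "(nat \<Rightarrow> 'a \<Rightarrow> real) \<Rightarrow> (nat \<Rightarrow> real) \<Rightarrow> nat \<Rightarrow> 'a \<Rightarrow> real" where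
  "rhat r lh i x = (if i = 1 then r 1 x else (r i x - (1 - lh i) * pbar r (i - 1) x) / lh i)"

definition phat :: "(nat \<Rightarrow> 'a \<Rightarrow> real) \<Rightarrow> (nat \<Rightarrow> real) \<Rightarrow> (nat \<Rightarrow> real) \<Rightarrow> nat \<Rightarrow> 'a \<Rightarrow> real" where
  "phat r lh w n x = (\<Sum>i=1..n. w i * rhat r lh i x) / (\<Sum>i=1..n. w i)"

end

theory Submission
  imports Defs
begin

text \<open>Taking expectations in the conditional law of \<open>r k\<close> gives
  \<open>E (r k) = lam k * p + (1 - lam k) * E (pbar r (k - 1))\<close>, so by strong induction every
  rating, and hence every running mean, has expectation \<open>p\<close>. The correction
  \<open>(r i - (1 - lh i) * pbar r (i - 1)) / lh i\<close> is affine and fixes the common mean \<open>p\<close> for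
  every \<open>lh i \<noteq> 0\<close>, whether or not \<open>lh i = lam i\<close>; a weighted mean of variables with mean
  \<open>p\<close> again has mean \<open>p\<close>.\<close>

lemma (in finite_measure)
  assumes "f \<in> borel_measurable M" and "\<And>x. x \<in> space M \<Longrightarrow> f x \<in> {0, 1}"
  shows integrable_01_valued: "integrable M f"
    and integral_01_valued: "(\<integral>x. f x \<partial>M) = measure M {x \<in> space M. f x = 1}"
proof -
  have event: "{x \<in> space M. f x = 1} \<in> sets M"
    using assms(1) by measurable
  have "(\<integral>x. f x \<partial>M) = (\<integral>x. indicator {x \<in> space M. f x = 1} x \<partial>M)"
    using assms(2) by (intro Bochner_Integration.integral_cong) (auto simp: indicator_def)
  then show "(\<integral>x. f x \<partial>M) = measure M {x \<in> space M. f x = 1}"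
    using event by simp
  show "integrable M f"
    using assms by (intro integrable_const_bound[where B = 1] AE_I2) fastforce+
qed

lemma subalgebra_gen_alg:
  assumes "\<And>i. i \<in> {1..n} \<Longrightarrow> r i \<in> borel_measurable M"
  shows "subalgebra M (gen_alg M r n)"
proof -
  have "{r i -` A \<inter> space M | i A. i \<in> {1..n} \<and> A \<in> sets borel} \<subseteq> sets M"
    using assms by (auto simp: measurable_sets)
  then show ?thesis
    unfolding subalgebra_def gen_alg_def
    by (auto simp: space_measure_of_conv sets_measure_of_conv intro!: sets.sigma_sets_subset)
qed

lemma
  assumes "m \<ge> 1"
    and "\<And>i. i \<in> {1..m} \<Longrightarrow> integrable M (r i)"
    and "\<And>i. i \<in> {1..m} \<Longrightarrow> (\<integral>x. r i x \<partial>M) = p"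
  shows integrable_pbar: "integrable M (pbar r m)"
    and integral_pbar: "(\<integral>x. pbar r m x \<partial>M) = p"
proof -
  show "integrable M (pbar r m)"
    unfolding pbar_def using assms(2) by (intro integrable_divide_zero integrable_sum) auto
  have "(\<integral>x. pbar r m x \<partial>M) = (\<Sum>i=1..m. (\<integral>x. r i x \<partial>M)) / real m"
    unfolding pbar_def using assms(2) by (simp add: integral_sum)
  also have "\<dots> = p"
    using assms(1,3) by simp
  finally show "(\<integral>x. pbar r m x \<partial>M) = p" .
qed

lemma (in prob_space) integral_rating_eq:
  assumes meas: "\<And>i. i \<ge> 1 \<Longrightarrow> r i \<in> borel_measurable M"
    and val: "\<And>i x. i \<ge> 1 \<Longrightarrow> x \<in> space M \<Longrightarrow> r i x \<in> {0, 1}"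
    and first: "measure M {x \<in> space M. r 1 x = 1} = p"
    and cond: "\<And>k. k \<ge> 2 \<Longrightarrow> AE x in M.
           real_cond_exp M (gen_alg M r (k - 1)) (indicator {y \<in> space M. r k y = 1}) x
             = lam k * p + (1 - lam k) * pbar r (k - 1) x"
    and "k \<ge> 1"
  shows "(\<integral>x. r k x \<partial>M) = p"
  using \<open>k \<ge> 1\<close>
proof (induction k rule: less_induct)
  case (less k)
  let ?A = "{y \<in> space M. r k y = 1}"
  have mean_r: "(\<integral>x. r k x \<partial>M) = measure M ?A"
    using integral_01_valued[OF meas val] less.prems by blast
  show ?case
  proof (cases "k = 1")
    case True
    then show ?thesis using mean_r first by simp
  next
    case False
    then have k: "k \<ge> 2" using less.prems by simp
    interpret finite_measure_subalgebra M "gen_alg M r (k - 1)"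
      by unfold_locales (use meas in \<open>auto intro: subalgebra_gen_alg\<close>)
    have "?A \<in> sets M"
      using meas[OF less.prems] by measurable
    then have integrable_A: "integrable M (indicator ?A :: 'a \<Rightarrow> real)"
      by (intro integrable_01_valued) (auto simp: indicator_def)
    have r_prev: "integrable M (r i)" "(\<integral>x. r i x \<partial>M) = p" if "i \<in> {1..k - 1}" for i
      using that less.IH integrable_01_valued[OF meas val] by auto
    have pbar_prev: "integrable M (pbar r (k - 1))" "(\<integral>x. pbar r (k - 1) x \<partial>M) = p"
      using k r_prev by (auto intro!: integrable_pbar integral_pbar)
    have "measure M ?A = (\<integral>x. real_cond_exp M (gen_alg M r (k - 1)) (indicator ?A) x \<partial>M)"
      using real_cond_exp_int(2)[OF integrable_A] \<open>?A \<in> sets M\<close> by simp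
    also have "\<dots> = (\<integral>x. lam k * p + (1 - lam k) * pbar r (k - 1) x \<partial>M)"
      using cond[OF k] pbar_prev
      by (intro integral_cong_AE) (auto simp: borel_measurable_integrable)
    also have "\<dots> = lam k * p + (1 - lam k) * p"
      using pbar_prev by (simp add: prob_space)
    also have "\<dots> = p"
      by (simp add: algebra_simps)
    finally show ?thesis
      using mean_r by simp
  qed
qed

lemma
  assumes "i \<ge> 1" and "i \<ge> 2 \<Longrightarrow> lh i \<noteq> 0"
    and "\<And>j. j \<in> {1..i} \<Longrightarrow> integrable M (r j)"
    and "\<And>j. j \<in> {1..i} \<Longrightarrow> (\<integral>x. r j x \<partial>M) = p"
  shows integrable_rhat: "integrable M (rhat r lh i)"
    and integral_rhat: "(\<integral>x. rhat r lh i x \<partial>M) = p"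
proof -
  have "integrable M (rhat r lh i) \<and> (\<integral>x. rhat r lh i x \<partial>M) = p"
  proof (cases "i = 1")
    case True
    then show ?thesis
      using assms(3,4) by (simp add: rhat_def[abs_def])
  next
    case False
    then have "i \<ge> 2" using assms(1) by simp
    have eq: "rhat r lh i = (\<lambda>x. (r i x - (1 - lh i) * pbar r (i - 1) x) / lh i)"
      using False by (auto simp: rhat_def)
    have prev: "integrable M (pbar r (i - 1))" "(\<integral>x. pbar r (i - 1) x \<partial>M) = p"
      using \<open>i \<ge> 2\<close> assms(3,4)
      by (auto intro!: integrable_pbar integral_pbar)
    have "(\<integral>x. (r i x - (1 - lh i) * pbar r (i - 1) x) / lh i \<partial>M)
        = (p - (1 - lh i) * p) / lh i"
      using prev assms(1,3,4) by simp
    also have "\<dots> = p"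
      using assms(2) \<open>i \<ge> 2\<close> by (simp add: field_simps)
    finally show ?thesis
      unfolding eq using prev assms(1,3) by simp
  qed
  then show "integrable M (rhat r lh i)" "(\<integral>x. rhat r lh i x \<partial>M) = p"
    by auto
qed

lemma integral_weighted_mean_eq:
  assumes "finite I" and "sum w I \<noteq> 0"
    and "\<And>i. i \<in> I \<Longrightarrow> integrable M (f i)"
    and "\<And>i. i \<in> I \<Longrightarrow> (\<integral>x. f i x \<partial>M) = p"
  shows "(\<integral>x. (\<Sum>i\<in>I. w i * f i x) / sum w I \<partial>M) = (p :: real)"
proof -
  have "(\<integral>x. (\<Sum>i\<in>I. w i * f i x) / sum w I \<partial>M) = (\<Sum>i\<in>I. w i * p) / sum w I"
    using assms(3,4) by (simp add: integral_sum)
  also have "\<dots> = p"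
    using assms(2) by (simp add: sum_distrib_right[symmetric])
  finally show ?thesis .
qed

theorem theoremA9:
  fixes M :: "'a measure" and r :: "nat \<Rightarrow> 'a \<Rightarrow> real"
    and p :: real and lam lh w :: "nat \<Rightarrow> real" and n :: nat
  assumes "prob_space M"
    and "0 < p" "p < 1"
    and "lam 1 = 1"
    and "\<And>k. k > 1 \<Longrightarrow> 0 \<le> lam k \<and> lam k \<le> lam (k - 1)"
    and "\<And>i. i \<ge> 1 \<Longrightarrow> r i \<in> borel_measurable M"
    and "\<And>i x. i \<ge> 1 \<Longrightarrow> x \<in> space M \<Longrightarrow> r i x \<in> {0, 1}"
    and "measure M {x \<in> space M. r 1 x = 1} = p"
    and "\<And>k. k \<ge> 2 \<Longrightarrow> AE x in M.
           real_cond_exp M (gen_alg M r (k - 1)) (indicator {y \<in> space M. r k y = 1}) x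
             = lam k * p + (1 - lam k) * pbar r (k - 1) x"
    and "\<And>i. i \<ge> 2 \<Longrightarrow> 0 < lh i \<and> lh i \<le> 1"
    and "n \<ge> 1"
    and "\<And>i. i \<in> {1..n} \<Longrightarrow> w i > 0"
  shows "(\<forall>i\<ge>1. (\<integral>x. rhat r lh i x \<partial>M) = p) \<and> (\<integral>x. phat r lh w n x \<partial>M) = p"
proof -
  interpret prob_space M by (rule assms(1))
  have integrable_r: "integrable M (r i)" if "i \<ge> 1" for i
    using integrable_01_valued assms(6,7) that by blast
  have mean_r: "(\<integral>x. r i x \<partial>M) = p" if "i \<ge> 1" for i
    using integral_rating_eq[OF assms(6-9) that] .
  have lh_nonzero: "lh i \<noteq> 0" if "i \<ge> 2" for i
    using assms(10)[OF that] by simp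
  have rhat: "integrable M (rhat r lh i)" "(\<integral>x. rhat r lh i x \<partial>M) = p" if "i \<ge> 1" for i
    using that integrable_r mean_r lh_nonzero
    by (auto intro!: integrable_rhat integral_rhat)
  have "sum w {1..n} > 0"
    using assms(11,12) by (intro sum_pos) auto
  then have "(\<integral>x. phat r lh w n x \<partial>M) = p"
    unfolding phat_def using rhat by (intro integral_weighted_mean_eq) auto
  with rhat show ?thesis by blast
qed

end
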